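(* Let $\Pi_n=\{\pi_1,\ldots,\pi_n\}$ be a finite set of policies of a discrete mean-field game (setting in the context) with $J$ $\mu$-diff-affine. Then the restricted game on $\Pi_n$ admits a Nash equilibrium $\nu\in\Delta(\Pi_n)$ (i.e. $J(\pi_k,\mu(\nu))\le J(\pi(\nu),\mu(\nu))$ for all $k$), a correlated equilibrium and a coarse correlated equilibrium.
   Context: A discrete mean-field game consists of finite state set $\mathcal X$, finite action set $\mathcal A$, reward $r:\mathcal X\times\mathcal A\times\Delta(\mathcal X)\to\mathbb R$, transitions $p(x'\mid x,a)$ independent of the population distribution, initial distribution $\mu_0$. A policy is $\pi:\mathcal X\to\Delta(\mathcal A)$; $\mu^\pi$ is its state occupancy measure; $J(\pi,\mu)=\sum_{x,a}\mu^\pi(x)\pi(x,a)r(x,a,\mu)$. For $\nu\in\Delta(\Pi_n)$, $\mu(\nu)=\sum_j\nu(\pi_j)\mu^{\pi_j}$ and $J(\pi(\nu),\mu)=\sum_i\nu(\pi_i)J(\pi_i,\mu)$. $J$ is $\mu$-diff-affine if for all policies $\pi,\pi'$ the map $\mu\mapsto J(\pi,\mu)-J(\pi',\mu)$ is affine. A restricted coarse correlated equilibrium is a finitely supported distribution $\rho$ over $\Delta(\Pi_n)$ with $\mathbb E_{\nu\sim\rho}[J(\pi_k,\mu(\nu))-J(\pi(\nu),\mu(\nu))]\le0$ for all $k$; a restricted correlated equilibrium is such a $\rho$ with $\sum_\nu\rho(\nu)\nu(\pi_i)\big(J(\pi_k,\mu(\nu))-J(\pi_i,\mu(\nu))\big)\le0$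 for all $i,k$. *)

theory Defs
  imports Complex_Main
begin

definition is_dist :: "('x::finite \<Rightarrow> real) \<Rightarrow> bool" where
  "is_dist d \<longleftrightarrow> (\<forall>x. 0 \<le> d x) \<and> (\<Sum>x\<in>UNIV. d x) = 1"

definition is_policy :: "('x::finite \<Rightarrow> 'a::finite \<Rightarrow> real) \<Rightarrow> bool" where
  "is_policy pol \<longleftrightarrow> (\<forall>x. is_dist (pol x))"

text \<open>State distribution at time t when playing pol from mu0 under transitions p x a x' = p(x'|x,a).\<close>
fun state_dist :: "('x::finite \<Rightarrow> 'a::finite \<Rightarrow> 'x \<Rightarrow> real) \<Rightarrow> ('x \<Rightarrow> real)
    \<Rightarrow> ('x \<Rightarrow> 'a \<Rightarrow> real) \<Rightarrow> nat \<Rightarrow> 'x \<Rightarrow> real" where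
  "state_dist p mu0 pol 0 = mu0"
| "state_dist p mu0 pol (Suc t) =
     (\<lambda>x'. \<Sum>x\<in>UNIV. \<Sum>a\<in>UNIV. state_dist p mu0 pol t x * pol x a * p x a x')"

definition occ :: "real \<Rightarrow> ('x::finite \<Rightarrow> 'a::finite \<Rightarrow> 'x \<Rightarrow> real) \<Rightarrow> ('x \<Rightarrow> real)
    \<Rightarrow> ('x \<Rightarrow> 'a \<Rightarrow> real) \<Rightarrow> 'x \<Rightarrow> real" where
  "occ \<gamma> p mu0 pol = (\<lambda>x. (1 - \<gamma>) * (\<Sum>t. \<gamma> ^ t * state_dist p mu0 pol t x))"

definition J :: "('x::finite \<Rightarrow> 'a::finite \<Rightarrow> ('x \<Rightarrow> real) \<Rightarrow> real) \<Rightarrow>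
    ('x \<Rightarrow> 'a \<Rightarrow> 'x \<Rightarrow> real) \<Rightarrow> ('x \<Rightarrow> real) \<Rightarrow> real \<Rightarrow>
    ('x \<Rightarrow> 'a \<Rightarrow> real) \<Rightarrow> ('x \<Rightarrow> real) \<Rightarrow> real" where
  "J r p mu0 \<gamma> pol mu = (\<Sum>x\<in>UNIV. \<Sum>a\<in>UNIV. occ \<gamma> p mu0 pol x * pol x a * r x a mu)"

definition mu_diff_affine :: "(('x::finite \<Rightarrow> 'a::finite \<Rightarrow> real) \<Rightarrow> ('x \<Rightarrow> real) \<Rightarrow> real) \<Rightarrow> bool" where
  "mu_diff_affine Jf \<longleftrightarrow>
     (\<forall>pol pol'. is_policy pol \<longrightarrow> is_policy pol' \<longrightarrow>
        (\<forall>m m' t. is_dist m \<longrightarrow> is_dist m' \<longrightarrow> 0 \<le> t \<longrightarrow> t \<le> 1 \<longrightarrow>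
           Jf pol (\<lambda>x. t * m x + (1 - t) * m' x) - Jf pol' (\<lambda>x. t * m x + (1 - t) * m' x)
           = t * (Jf pol m - Jf pol' m) + (1 - t) * (Jf pol m' - Jf pol' m')))"

text \<open>Delta(Pi_n): weights on the indices 0..n-1 of the policies pis 0, ..., pis (n-1).\<close>
definition restr_simplex :: "nat \<Rightarrow> (nat \<Rightarrow> real) \<Rightarrow> bool" where
  "restr_simplex n \<nu> \<longleftrightarrow> (\<forall>i. 0 \<le> \<nu> i) \<and> (\<forall>i\<ge>n. \<nu> i = 0) \<and> (\<Sum>i<n. \<nu> i) = 1"

definition mix_mu :: "(('x \<Rightarrow> 'a \<Rightarrow> real) \<Rightarrow> 'x \<Rightarrow> real) \<Rightarrow> (nat \<Rightarrow> 'x \<Rightarrow> 'a \<Rightarrow> real)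
    \<Rightarrow> nat \<Rightarrow> (nat \<Rightarrow> real) \<Rightarrow> 'x \<Rightarrow> real" where
  "mix_mu occf pis n \<nu> = (\<lambda>x. \<Sum>j<n. \<nu> j * occf (pis j) x)"

definition J_mix :: "(('x \<Rightarrow> 'a \<Rightarrow> real) \<Rightarrow> ('x \<Rightarrow> real) \<Rightarrow> real) \<Rightarrow> (nat \<Rightarrow> 'x \<Rightarrow> 'a \<Rightarrow> real)
    \<Rightarrow> nat \<Rightarrow> (nat \<Rightarrow> real) \<Rightarrow> ('x \<Rightarrow> real) \<Rightarrow> real" where
  "J_mix Jf pis n \<nu> mu = (\<Sum>i<n. \<nu> i * Jf (pis i) mu)"

definition restricted_nash where
  "restricted_nash Jf occf pis n \<nu> \<longleftrightarrow> restr_simplex n \<nu> \<and>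
     (\<forall>k<n. Jf (pis k) (mix_mu occf pis n \<nu>) \<le> J_mix Jf pis n \<nu> (mix_mu occf pis n \<nu>))"

definition is_meta_dist :: "nat \<Rightarrow> ((nat \<Rightarrow> real) \<Rightarrow> real) \<Rightarrow> bool" where
  "is_meta_dist n \<rho> \<longleftrightarrow> finite {\<nu>. \<rho> \<nu> \<noteq> 0} \<and> (\<forall>\<nu>. 0 \<le> \<rho> \<nu>)
     \<and> (\<forall>\<nu>. \<rho> \<nu> \<noteq> 0 \<longrightarrow> restr_simplex n \<nu>) \<and> (\<Sum>\<nu>\<in>{\<nu>. \<rho> \<nu> \<noteq> 0}. \<rho> \<nu>) = 1"

definition restricted_cce where
  "restricted_cce Jf occf pis n \<rho> \<longleftrightarrow> is_meta_dist n \<rho> \<and>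
     (\<forall>k<n. (\<Sum>\<nu>\<in>{\<nu>. \<rho> \<nu> \<noteq> 0}. \<rho> \<nu> *
        (Jf (pis k) (mix_mu occf pis n \<nu>) - J_mix Jf pis n \<nu> (mix_mu occf pis n \<nu>))) \<le> 0)"

definition restricted_ce where
  "restricted_ce Jf occf pis n \<rho> \<longleftrightarrow> is_meta_dist n \<rho> \<and>
     (\<forall>i<n. \<forall>k<n. (\<Sum>\<nu>\<in>{\<nu>. \<rho> \<nu> \<noteq> 0}. \<rho> \<nu> * \<nu> i *
        (Jf (pis k) (mix_mu occf pis n \<nu>) - Jf (pis i) (mix_mu occf pis n \<nu>))) \<le> 0)"

end

theory Submission
  imports Defs "HOL-Analysis.Analysis"
begin

(* With mu-diff-affine payoffs, J(pi_k, mu) - J(pi_0, mu) is a linear functional of mu, and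
   mu(nu) is linear in nu, so the restricted game is a finite population game whose payoff
   differences depend continuously on the mixture nu. Brouwer's theorem, applied on the convex
   hull of the occupancy measures to a smoothed best-reply map, gives epsilon-equilibria for
   every epsilon > 0, and a limit point of these is a mixture nu supported on best replies,
   i.e. a Nash equilibrium. The point mass at nu is then a correlated equilibrium, and every
   correlated equilibrium is a coarse correlated one. *)

lemma is_dist_le_1: "is_dist (d :: 'x::finite \<Rightarrow> real) \<Longrightarrow> d x \<le> 1"
  unfolding is_dist_def by (metis UNIV_I finite member_le_sum)

lemma is_dist_state_dist:
  assumes "is_dist mu0" "\<forall>x a. is_dist (p x a)" "is_policy pol"
  shows "is_dist (state_dist p mu0 pol t)"
proof (induction t)
  case 0
  show ?case using assms(1) by simp
next
  case (Suc t)
  let ?m = "state_dist p mu0 pol t"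
  have "(\<Sum>x'\<in>UNIV. state_dist p mu0 pol (Suc t) x')
      = (\<Sum>x\<in>UNIV. \<Sum>x'\<in>UNIV. \<Sum>a\<in>UNIV. ?m x * pol x a * p x a x')"
    unfolding state_dist.simps by (rule sum.swap)
  also have "\<dots> = (\<Sum>x\<in>UNIV. \<Sum>a\<in>UNIV. ?m x * pol x a * (\<Sum>x'\<in>UNIV. p x a x'))"
    unfolding sum_distrib_left by (rule sum.cong[OF refl], rule sum.swap)
  also have "\<dots> = (\<Sum>x\<in>UNIV. ?m x * (\<Sum>a\<in>UNIV. pol x a))"
    using assms(2) by (simp add: is_dist_def sum_distrib_left)
  also have "\<dots> = 1"
    using Suc assms(3) by (simp add: is_dist_def is_policy_def)
  finally show ?case
    using Suc assms(2,3) by (auto simp: is_dist_def is_policy_def intro!: sum_nonneg)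
qed

lemma is_dist_occ:
  assumes "is_dist mu0" "\<forall>x a. is_dist (p x a)" "is_policy pol" "0 \<le> \<gamma>" "\<gamma> < 1"
  shows "is_dist (occ \<gamma> p mu0 pol)"
proof -
  let ?s = "\<lambda>x t. \<gamma> ^ t * state_dist p mu0 pol t x"
  have dist: "is_dist (state_dist p mu0 pol t)" for t
    using assms(1-3) by (rule is_dist_state_dist)
  have summable: "summable (?s x)" for x
  proof (rule summable_comparison_test)
    show "\<exists>N. \<forall>t\<ge>N. norm (?s x t) \<le> \<gamma> ^ t"
      using dist is_dist_le_1[OF dist] assms(4)
      by (auto simp: is_dist_def abs_mult mult_left_le)
    show "summable (\<lambda>t. \<gamma> ^ t)"
      using assms(4,5) by (simp add: summable_geometric)
  qed
  have "(\<Sum>x\<in>UNIV. \<Sum>t. ?s x t) = (\<Sum>t. \<Sum>x\<in>UNIV. ?s x t)"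
    using summable by (simp add: suminf_sum)
  also have "\<dots> = (\<Sum>t. \<gamma> ^ t)"
    using dist by (simp add: is_dist_def sum_distrib_left[symmetric])
  also have "\<dots> = 1 / (1 - \<gamma>)"
    using assms(4,5) by (simp add: suminf_geometric)
  finally have "(\<Sum>x\<in>UNIV. occ \<gamma> p mu0 pol x) = 1"
    using assms(5) by (simp add: occ_def sum_distrib_left[symmetric])
  moreover have "0 \<le> occ \<gamma> p mu0 pol x" for x
    unfolding occ_def using dist assms(4,5) summable
    by (auto simp: is_dist_def intro!: mult_nonneg_nonneg suminf_nonneg)
  ultimately show ?thesis by (simp add: is_dist_def)
qed

lemma is_dist_mix_mu:
  assumes "restr_simplex n \<nu>" and "\<forall>j<n. is_dist (occf (pis j))"
  shows "is_dist (mix_mu occf pis n \<nu>)"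
proof -
  have "(\<Sum>x\<in>UNIV. mix_mu occf pis n \<nu> x) = (\<Sum>j<n. \<nu> j * (\<Sum>x\<in>UNIV. occf (pis j) x))"
    by (simp add: mix_mu_def sum_distrib_left sum.swap[of _ UNIV])
  then show ?thesis
    using assms by (auto simp: is_dist_def restr_simplex_def mix_mu_def intro!: sum_nonneg)
qed

lemma sum_indicator_singleton_mult:
  "(\<Sum>x\<in>UNIV. indicator {a} x * f x) = (f (a::'x::finite) :: real)"
  by (subst sum.remove[of _ a]) (auto simp: indicator_def)

lemma is_dist_indicator_singleton: "is_dist (indicator {a} :: 'x::finite \<Rightarrow> real)"
  using sum_indicator_singleton_mult[of a "\<lambda>_. 1"] by (simp add: is_dist_def)

text \<open>Induction on the support: m is a convex combination of the point mass at a and a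
  distribution supported on the remaining points.\<close>
lemma affine_on_dists_eq_sum_point_masses:
  fixes D :: "('x::finite \<Rightarrow> real) \<Rightarrow> real"
  assumes affine: "\<And>m m' t. is_dist m \<Longrightarrow> is_dist m' \<Longrightarrow> 0 \<le> t \<Longrightarrow> t \<le> 1 \<Longrightarrow>
      D (\<lambda>x. t * m x + (1 - t) * m' x) = t * D m + (1 - t) * D m'"
    and "is_dist m"
  shows "D m = (\<Sum>x\<in>UNIV. m x * D (indicator {x}))"
proof -
  have support_induct: "D m = (\<Sum>x\<in>UNIV. m x * D (indicator {x}))"
    if "finite S" "is_dist m" "\<forall>x. x \<notin> S \<longrightarrow> m x = 0" for S m
    using that
  proof (induction S arbitrary: m rule: finite_induct)
    case empty
    then show ?case by (simp add: is_dist_def)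
  next
    case (insert a S)
    have m_nonneg: "\<forall>x. 0 \<le> m x" and m_sum: "m a + (\<Sum>x\<in>UNIV - {a}. m x) = 1"
      using insert.prems(1) by (auto simp: is_dist_def sum.remove[symmetric])
    show ?case
    proof (cases "m a = 1")
      case True
      then have "m = indicator {a}"
        using m_sum m_nonneg by (auto simp: sum_nonneg_eq_0_iff fun_eq_iff split: split_indicator)
      then show ?thesis
        by (simp add: sum_indicator_singleton_mult)
    next
      case False
      then have "m a < 1"
        using is_dist_le_1[OF insert.prems(1), of a] by simp
      define m' where "m' x = (if x = a then 0 else m x / (1 - m a))" for x
      have "(\<Sum>x\<in>UNIV. m' x) = (\<Sum>x\<in>UNIV - {a}. m x) / (1 - m a)"
        by (simp add: sum.remove[of _ a] m'_def sum_divide_distrib)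
      then have "is_dist m'"
        using m_sum m_nonneg \<open>m a < 1\<close> by (simp add: is_dist_def m'_def)
      moreover have "\<forall>x. x \<notin> S \<longrightarrow> m' x = 0"
        using insert.prems(2) by (simp add: m'_def)
      ultimately have IH: "D m' = (\<Sum>x\<in>UNIV. m' x * D (indicator {x}))"
        by (rule insert.IH)
      have m_split: "m x = m a * indicator {a} x + (1 - m a) * m' x" for x
        using \<open>m a < 1\<close> by (simp add: m'_def split: split_indicator)
      have "D m = D (\<lambda>x. m a * indicator {a} x + (1 - m a) * m' x)"
        by (rule arg_cong[where f = D], rule ext, rule m_split)
      also have "\<dots> = m a * D (indicator {a}) + (1 - m a) * D m'"
        using m_nonneg \<open>m a < 1\<close> \<open>is_dist m'\<close> by (intro affine is_dist_indicator_singleton) auto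
      also have "\<dots> = (\<Sum>x\<in>UNIV. (m a * indicator {a} x + (1 - m a) * m' x) * D (indicator {x}))"
        by (simp add: IH distrib_right sum.distrib mult.assoc sum_distrib_left[symmetric]
            sum_indicator_singleton_mult)
      also have "\<dots> = (\<Sum>x\<in>UNIV. m x * D (indicator {x}))"
        by (simp only: m_split[symmetric])
      finally show ?thesis .
    qed
  qed
  show ?thesis
    using support_induct[OF finite[of UNIV] assms(2)] by simp
qed

lemma continuous_on_Max:
  fixes f :: "'i \<Rightarrow> 'a::topological_space \<Rightarrow> 'b::linorder_topology"
  assumes "finite I" "I \<noteq> {}" "\<And>i. i \<in> I \<Longrightarrow> continuous_on S (f i)"
  shows "continuous_on S (\<lambda>x. Max ((\<lambda>i. f i x) ` I))"
  using assms by (induction I rule: finite_ne_induct) (auto intro: continuous_on_max)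

lemma coordinatewise_convergent_subseq:
  fixes f :: "nat \<Rightarrow> 'i \<Rightarrow> real"
  assumes "finite I" "\<And>i. i \<in> I \<Longrightarrow> bounded (range (\<lambda>m. f m i))"
  shows "\<exists>l r. strict_mono r \<and> (\<forall>i\<in>I. (\<lambda>m. f (r m) i) \<longlonglongrightarrow> l i)"
proof -
  have "\<exists>l r. strict_mono r \<and>
      (\<forall>e>0. eventually (\<lambda>m. \<forall>i\<in>I. dist (f (r m) i) (l i) < e) sequentially)"
    using compact_lemma_general[where proj = "\<lambda>x i. x i" and unproj = id and f = f, OF assms(1)]
      assms(2) by (simp add: image_image)
  then obtain l r where r: "strict_mono r"
    and lim: "\<And>e. e > 0 \<Longrightarrow> eventually (\<lambda>m. \<forall>i\<in>I. dist (f (r m) i) (l i) < e) sequentially"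
    by blast
  have "(\<lambda>m. f (r m) i) \<longlonglongrightarrow> l i" if "i \<in> I" for i
    using that by (intro tendstoI) (auto elim!: eventually_mono dest: lim)
  with r show ?thesis by blast
qed

definition approx_equilibrium ::
    "nat \<Rightarrow> (nat \<Rightarrow> 'v \<Rightarrow> real) \<Rightarrow> (nat \<Rightarrow> 'v::real_vector) \<Rightarrow> real \<Rightarrow> (nat \<Rightarrow> real) \<Rightarrow> bool" where
  "approx_equilibrium n u ov \<epsilon> \<nu> \<longleftrightarrow> restr_simplex n \<nu> \<and>
     (\<forall>k<n. 0 < \<nu> k \<longrightarrow> (\<forall>j<n. u j (\<Sum>i<n. \<nu> i *\<^sub>R ov i) \<le> u k (\<Sum>i<n. \<nu> i *\<^sub>R ov i) + \<epsilon>))"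

lemma restr_simplex_le_1: "restr_simplex n \<nu> \<Longrightarrow> \<nu> i \<le> 1"
  unfolding restr_simplex_def
  by (metis finite_lessThan lessThan_iff member_le_sum not_le zero_less_one_class.zero_le_one)

lemma restr_simplex_mixture_in_convex_hull:
  "restr_simplex n \<nu> \<Longrightarrow> (\<Sum>i<n. \<nu> i *\<^sub>R ov i) \<in> convex hull (ov ` {..<n})"
  by (rule convex_sum) (auto simp: restr_simplex_def hull_inc)

lemma restr_simplex_closed:
  assumes "\<And>m. restr_simplex n (\<nu>s m)" and "\<And>i. (\<lambda>m. \<nu>s m i) \<longlonglongrightarrow> \<nu> i"
  shows "restr_simplex n \<nu>"
proof -
  have "(\<lambda>m. \<Sum>i<n. \<nu>s m i) \<longlonglongrightarrow> (\<Sum>i<n. \<nu> i)"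
    by (intro tendsto_sum assms(2))
  then have "(\<Sum>i<n. \<nu> i) = 1"
    using assms(1) by (simp add: restr_simplex_def LIMSEQ_const_iff)
  moreover have "0 \<le> \<nu> i" for i
    using assms by (intro LIMSEQ_le_const[of "\<lambda>m. \<nu>s m i"]) (auto simp: restr_simplex_def)
  moreover have "\<nu> i = 0" if "i \<ge> n" for i
    using assms(1) that LIMSEQ_unique[OF assms(2)[of i]] by (simp add: restr_simplex_def)
  ultimately show ?thesis by (simp add: restr_simplex_def)
qed

text \<open>Brouwer's theorem for a smoothed best-reply map on the convex hull of the outcomes:
  strategy k gets weight proportional to max 0 (u k \<mu> - max_j u j \<mu> + \<epsilon>), which is
  positive only for \<epsilon>-best replies.\<close>
lemma approx_equilibrium_exists:
  fixes ov :: "nat \<Rightarrow> 'v::euclidean_space"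
  assumes "n \<ge> 1" and "\<epsilon> > 0"
    and cont: "\<And>k. k < n \<Longrightarrow> continuous_on (convex hull (ov ` {..<n})) (u k)"
  shows "\<exists>\<nu>. approx_equilibrium n u ov \<epsilon> \<nu>"
proof -
  define S where "S = convex hull (ov ` {..<n})"
  define G where "G \<mu> = Max ((\<lambda>j. u j \<mu>) ` {..<n})" for \<mu>
  define w where "w \<mu> k = max 0 (u k \<mu> - G \<mu> + \<epsilon>)" for \<mu> k
  define W where "W \<mu> = (\<Sum>k<n. w \<mu> k)" for \<mu>
  define \<nu> where "\<nu> \<mu> k = (if k < n then w \<mu> k / W \<mu> else 0)" for \<mu> k
  define F where "F \<mu> = (\<Sum>k<n. \<nu> \<mu> k *\<^sub>R ov k)" for \<mu>
  have G_ge: "u j \<mu> \<le> G \<mu>" if "j < n" for j \<mu>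
    unfolding G_def using that by (intro Max_ge) auto
  have W_ge: "W \<mu> \<ge> \<epsilon>" for \<mu>
  proof -
    have "G \<mu> \<in> (\<lambda>j. u j \<mu>) ` {..<n}"
      unfolding G_def using assms(1) by (intro Max_in) (auto simp: lessThan_empty_iff)
    then obtain j where "j < n" "w \<mu> j = \<epsilon>"
      using assms(2) by (auto simp: w_def)
    then show ?thesis
      unfolding W_def by (metis finite_lessThan lessThan_iff max.cobounded1 member_le_sum w_def)
  qed
  have W_pos: "0 < W \<mu>" for \<mu>
    using W_ge assms(2) by (rule order.strict_trans2[rotated])
  have simplex: "restr_simplex n (\<nu> \<mu>)" for \<mu>
    using W_pos[of \<mu>]
    by (auto simp: restr_simplex_def \<nu>_def w_def W_def sum_divide_distrib[symmetric])
  have "continuous_on S G"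
    unfolding G_def S_def using assms(1) cont
    by (intro continuous_on_Max) (auto simp: lessThan_empty_iff)
  then have cont_w: "continuous_on S (\<lambda>\<mu>. w \<mu> k)" if "k < n" for k
    unfolding w_def S_def using cont[OF that] by (intro continuous_intros)
  have "continuous_on S F"
  proof -
    have "F = (\<lambda>\<mu>. \<Sum>k<n. (w \<mu> k / W \<mu>) *\<^sub>R ov k)"
      by (simp add: F_def \<nu>_def fun_eq_iff)
    moreover have "continuous_on S W"
      unfolding W_def by (intro continuous_on_sum) (simp add: cont_w)
    ultimately show ?thesis
      using W_pos cont_w by (auto intro!: continuous_intros simp: less_imp_neq[THEN not_sym])
  qed
  moreover have "F \<in> S \<rightarrow> S"
    using simplex unfolding F_def S_def by (auto intro: restr_simplex_mixture_in_convex_hull)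
  moreover have "compact S" "convex S" "S \<noteq> {}"
    unfolding S_def using assms(1)
    by (auto simp: lessThan_empty_iff finite_imp_compact compact_convex_hull)
  ultimately obtain \<mu> where "F \<mu> = \<mu>"
    using brouwer[of S F] by blast
  have "approx_equilibrium n u ov \<epsilon> (\<nu> \<mu>)"
    unfolding approx_equilibrium_def
  proof (intro conjI simplex allI impI)
    fix k j assume "k < n" "0 < \<nu> \<mu> k" "j < n"
    then have "u k \<mu> - G \<mu> + \<epsilon> > 0"
      using W_pos[of \<mu>] by (auto simp: \<nu>_def w_def zero_less_divide_iff)
    then show "u j (\<Sum>i<n. \<nu> \<mu> i *\<^sub>R ov i) \<le> u k (\<Sum>i<n. \<nu> \<mu> i *\<^sub>R ov i) + \<epsilon>"
      using G_ge[OF \<open>j < n\<close>, of \<mu>] \<open>F \<mu> = \<mu>\<close> by (simp add: F_def)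
  qed
  then show ?thesis by blast
qed

lemma equilibrium_exists:
  fixes ov :: "nat \<Rightarrow> 'v::euclidean_space"
  assumes "n \<ge> 1"
    and cont: "\<And>k. k < n \<Longrightarrow> continuous_on (convex hull (ov ` {..<n})) (u k)"
  shows "\<exists>\<nu>. approx_equilibrium n u ov 0 \<nu>"
proof -
  define S where "S = convex hull (ov ` {..<n})"
  define M where "M \<nu> = (\<Sum>i<n. \<nu> i *\<^sub>R ov i)" for \<nu>
  have "\<forall>m. \<exists>\<nu>. approx_equilibrium n u ov (1 / Suc m) \<nu>"
    using approx_equilibrium_exists[OF assms(1) _ cont] by simp
  then obtain \<nu>s where eq: "\<And>m. approx_equilibrium n u ov (1 / Suc m) (\<nu>s m)"
    by metis
  then have simplex: "restr_simplex n (\<nu>s m)" for m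
    by (simp add: approx_equilibrium_def)
  have "bounded (range (\<lambda>m. \<nu>s m i))" for i
  proof (intro boundedI[of _ 1])
    fix x assume "x \<in> range (\<lambda>m. \<nu>s m i)"
    then obtain m where "x = \<nu>s m i" by blast
    then show "norm x \<le> 1"
      using restr_simplex_le_1[OF simplex[of m]] simplex[of m] by (auto simp: restr_simplex_def)
  qed
  then obtain l r where r: "strict_mono r" and lim_l: "\<forall>i\<in>{..<n}. (\<lambda>m. \<nu>s (r m) i) \<longlonglongrightarrow> l i"
    using coordinatewise_convergent_subseq[of "{..<n}" \<nu>s] by blast
  define \<nu> where "\<nu> i = (if i < n then l i else 0)" for i
  have lim: "(\<lambda>m. \<nu>s (r m) i) \<longlonglongrightarrow> \<nu> i" for i
    using lim_l simplex by (auto simp: \<nu>_def restr_simplex_def)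
  have "restr_simplex n \<nu>"
    using simplex lim by (rule restr_simplex_closed)
  have in_S: "M \<nu>' \<in> S" if "restr_simplex n \<nu>'" for \<nu>'
    unfolding M_def S_def using that by (rule restr_simplex_mixture_in_convex_hull)
  have lim_M: "(\<lambda>m. M (\<nu>s (r m))) \<longlonglongrightarrow> M \<nu>"
    unfolding M_def by (intro tendsto_intros lim)
  have lim_u: "(\<lambda>m. u i (M (\<nu>s (r m)))) \<longlonglongrightarrow> u i (M \<nu>)" if "i < n" for i
  proof (rule continuous_on_tendsto_compose[OF cont[OF that, folded S_def] lim_M])
    show "M \<nu> \<in> S" using \<open>restr_simplex n \<nu>\<close> by (rule in_S)
    show "\<forall>\<^sub>F m in sequentially. M (\<nu>s (r m)) \<in> S" by (simp add: in_S simplex)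
  qed
  have best: "u j (M \<nu>) \<le> u k (M \<nu>)" if "k < n" "0 < \<nu> k" "j < n" for j k
  proof (rule tendsto_le[OF trivial_limit_sequentially])
    show "(\<lambda>m. u j (M (\<nu>s (r m)))) \<longlonglongrightarrow> u j (M \<nu>)"
      using \<open>j < n\<close> by (rule lim_u)
    have lim_eps: "(\<lambda>m. 1 / real (Suc (r m))) \<longlonglongrightarrow> 0"
      using LIMSEQ_subseq_LIMSEQ[OF LIMSEQ_Suc[OF lim_1_over_n] r] by (simp add: o_def)
    show "(\<lambda>m. u k (M (\<nu>s (r m))) + 1 / Suc (r m)) \<longlonglongrightarrow> u k (M \<nu>)"
      using tendsto_add[OF lim_u[OF \<open>k < n\<close>] lim_eps] by simp
    have "eventually (\<lambda>m. 0 < \<nu>s (r m) k) sequentially"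
      using lim \<open>0 < \<nu> k\<close> by (rule order_tendstoD)
    then show "eventually (\<lambda>m. u j (M (\<nu>s (r m))) \<le> u k (M (\<nu>s (r m))) + 1 / Suc (r m)) sequentially"
    proof (rule eventually_mono)
      fix m assume "0 < \<nu>s (r m) k"
      then show "u j (M (\<nu>s (r m))) \<le> u k (M (\<nu>s (r m))) + 1 / Suc (r m)"
        using eq[of "r m"] that unfolding approx_equilibrium_def M_def by blast
    qed
  qed
  have "approx_equilibrium n u ov 0 \<nu>"
    unfolding approx_equilibrium_def M_def[symmetric]
    using \<open>restr_simplex n \<nu>\<close> best by simp
  then show ?thesis by blast
qed

definition supported_best_replies ::
    "(('x \<Rightarrow> 'a \<Rightarrow> real) \<Rightarrow> ('x \<Rightarrow> real) \<Rightarrow> real) \<Rightarrow> (('x \<Rightarrow> 'a \<Rightarrow> real) \<Rightarrow> 'x \<Rightarrow> real)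
      \<Rightarrow> (nat \<Rightarrow> 'x \<Rightarrow> 'a \<Rightarrow> real) \<Rightarrow> nat \<Rightarrow> (nat \<Rightarrow> real) \<Rightarrow> bool" where
  "supported_best_replies Jf occf pis n \<nu> \<longleftrightarrow>
     (\<forall>i<n. 0 < \<nu> i \<longrightarrow> (\<forall>k<n.
        Jf (pis k) (mix_mu occf pis n \<nu>) \<le> Jf (pis i) (mix_mu occf pis n \<nu>)))"

text \<open>Best replies only depend on the payoff differences D k to the reference policy pis 0,
  which diff-affinity makes linear, hence continuous, in the population distribution.\<close>
lemma supported_best_replies_exist:
  fixes Jf :: "('x::finite \<Rightarrow> 'a::finite \<Rightarrow> real) \<Rightarrow> ('x \<Rightarrow> real) \<Rightarrow> real"
  assumes "mu_diff_affine Jf" and "n \<ge> 1"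
    and "\<forall>i<n. is_policy (pis i)" and "\<forall>i<n. is_dist (occf (pis i))"
  shows "\<exists>\<nu>. restr_simplex n \<nu> \<and> supported_best_replies Jf occf pis n \<nu>"
proof -
  define D where "D k m = Jf (pis k) m - Jf (pis 0) m" for k m
  have D_linear: "D k m = (\<Sum>x\<in>UNIV. m x * D k (indicator {x}))" if "k < n" "is_dist m" for k m
  proof (rule affine_on_dists_eq_sum_point_masses[OF _ that(2)])
    fix m m' :: "'x \<Rightarrow> real" and t :: real
    assume "is_dist m" "is_dist m'" "0 \<le> t" "t \<le> 1"
    then show "D k (\<lambda>x. t * m x + (1 - t) * m' x) = t * D k m + (1 - t) * D k m'"
      using assms(1-3) that(1) unfolding mu_diff_affine_def D_def by simp
  qed
  define u where "u k v = (\<Sum>x\<in>UNIV. v $ x * D k (indicator {x}))" for k and v :: "real ^ 'x"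
  define ov where "ov j = (\<chi> x. occf (pis j) x)" for j
  have "continuous_on (convex hull (ov ` {..<n})) (u k)" for k
    unfolding u_def by (intro continuous_intros)
  then obtain \<nu> where eq: "approx_equilibrium n u ov 0 \<nu>"
    using equilibrium_exists[OF assms(2)] by blast
  then have "restr_simplex n \<nu>"
    by (simp add: approx_equilibrium_def)
  have u_eq: "u k (\<Sum>i<n. \<nu> i *\<^sub>R ov i) = D k (mix_mu occf pis n \<nu>)" if "k < n" for k
    using D_linear[OF that is_dist_mix_mu[of n \<nu> occf pis, OF \<open>restr_simplex n \<nu>\<close> assms(4)]]
    by (simp add: u_def ov_def mix_mu_def mult.commute)
  have "supported_best_replies Jf occf pis n \<nu>"
    unfolding supported_best_replies_def
  proof (intro allI impI)
    fix i k assume "i < n" "0 < \<nu> i" "k < n"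
    then have "D k (mix_mu occf pis n \<nu>) \<le> D i (mix_mu occf pis n \<nu>)"
      using eq by (simp add: approx_equilibrium_def u_eq[symmetric])
    then show "Jf (pis k) (mix_mu occf pis n \<nu>) \<le> Jf (pis i) (mix_mu occf pis n \<nu>)"
      by (simp add: D_def)
  qed
  with \<open>restr_simplex n \<nu>\<close> show ?thesis by blast
qed

lemma supported_best_replies_weighted_regret_nonpos:
  assumes "restr_simplex n \<nu>" and "supported_best_replies Jf occf pis n \<nu>"
    and "i < n" and "k < n"
  shows "\<nu> i * (Jf (pis k) (mix_mu occf pis n \<nu>) - Jf (pis i) (mix_mu occf pis n \<nu>)) \<le> 0"
proof (cases "\<nu> i = 0")
  case False
  then have "0 < \<nu> i"
    using assms(1) by (simp add: restr_simplex_def order_less_le)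
  then show ?thesis
    using assms(2-4) by (simp add: supported_best_replies_def mult_nonneg_nonpos)
qed simp

lemma regret_eq_sum_weighted_regrets:
  assumes "(\<Sum>i<n. \<nu> i) = 1"
  shows "Jf (pis k) m - J_mix Jf pis n \<nu> m = (\<Sum>i<n. \<nu> i * (Jf (pis k) m - Jf (pis i) m))"
  using assms by (simp add: J_mix_def right_diff_distrib sum_subtractf flip: sum_distrib_right)

lemma restricted_nash_if_supported_best_replies:
  assumes "restr_simplex n \<nu>" and "supported_best_replies Jf occf pis n \<nu>"
  shows "restricted_nash Jf occf pis n \<nu>"
  unfolding restricted_nash_def
proof (intro conjI assms(1) allI impI)
  fix k assume "k < n"
  let ?M = "mix_mu occf pis n \<nu>"
  have "Jf (pis k) ?M - J_mix Jf pis n \<nu> ?M = (\<Sum>i<n. \<nu> i * (Jf (pis k) ?M - Jf (pis i) ?M))"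
    using assms(1) by (intro regret_eq_sum_weighted_regrets) (simp add: restr_simplex_def)
  also have "\<dots> \<le> 0"
    using assms \<open>k < n\<close> by (intro sum_nonpos) (simp add: supported_best_replies_weighted_regret_nonpos)
  finally show "Jf (pis k) ?M \<le> J_mix Jf pis n \<nu> ?M"
    by simp
qed

lemma restricted_ce_point_mass_if_supported_best_replies:
  assumes "restr_simplex n \<nu>" and "supported_best_replies Jf occf pis n \<nu>"
  shows "restricted_ce Jf occf pis n (\<lambda>\<nu>'. if \<nu>' = \<nu> then 1 else 0)"
proof -
  have "{\<nu>'. (if \<nu>' = \<nu> then 1 else 0 :: real) \<noteq> 0} = {\<nu>}"
    by auto
  then show ?thesis
    using assms supported_best_replies_weighted_regret_nonpos[OF assms]
    unfolding restricted_ce_def is_meta_dist_def by simp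
qed

lemma restricted_cce_if_ce:
  assumes "restricted_ce Jf occf pis n \<rho>"
  shows "restricted_cce Jf occf pis n \<rho>"
  unfolding restricted_cce_def
proof (intro conjI allI impI)
  show "is_meta_dist n \<rho>"
    using assms by (simp add: restricted_ce_def)
  fix k assume "k < n"
  let ?supp = "{\<nu>. \<rho> \<nu> \<noteq> 0}" and ?M = "mix_mu occf pis n"
  have "\<rho> \<nu> * (Jf (pis k) (?M \<nu>) - J_mix Jf pis n \<nu> (?M \<nu>))
      = (\<Sum>i<n. \<rho> \<nu> * \<nu> i * (Jf (pis k) (?M \<nu>) - Jf (pis i) (?M \<nu>)))" if "\<nu> \<in> ?supp" for \<nu>
  proof -
    have "(\<Sum>i<n. \<nu> i) = 1"
      using that \<open>is_meta_dist n \<rho>\<close> by (simp add: is_meta_dist_def restr_simplex_def)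
    then show ?thesis
      by (simp add: regret_eq_sum_weighted_regrets sum_distrib_left mult.assoc)
  qed
  then have "(\<Sum>\<nu>\<in>?supp. \<rho> \<nu> * (Jf (pis k) (?M \<nu>) - J_mix Jf pis n \<nu> (?M \<nu>)))
      = (\<Sum>i<n. \<Sum>\<nu>\<in>?supp. \<rho> \<nu> * \<nu> i * (Jf (pis k) (?M \<nu>) - Jf (pis i) (?M \<nu>)))"
    by (simp add: sum.swap[of _ ?supp])
  also have "\<dots> \<le> 0"
    by (rule sum_nonpos) (use assms \<open>k < n\<close> in \<open>simp add: restricted_ce_def\<close>)
  finally show "(\<Sum>\<nu>\<in>?supp. \<rho> \<nu> * (Jf (pis k) (?M \<nu>) - J_mix Jf pis n \<nu> (?M \<nu>))) \<le> 0" .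
qed

theorem mainTheorem9:
  fixes r :: "'x::finite \<Rightarrow> 'a::finite \<Rightarrow> ('x \<Rightarrow> real) \<Rightarrow> real"
    and p :: "'x \<Rightarrow> 'a \<Rightarrow> 'x \<Rightarrow> real"
    and mu0 :: "'x \<Rightarrow> real"
    and \<gamma> :: real
    and pis :: "nat \<Rightarrow> 'x \<Rightarrow> 'a \<Rightarrow> real"
    and n :: nat
  assumes "is_dist mu0"
    and "\<forall>x a. is_dist (p x a)"
    and "0 \<le> \<gamma>" and "\<gamma> < 1"
    and "n \<ge> 1"
    and "\<forall>i<n. is_policy (pis i)"
    and "mu_diff_affine (J r p mu0 \<gamma>)"
  shows "(\<exists>\<nu>. restricted_nash (J r p mu0 \<gamma>) (occ \<gamma> p mu0) pis n \<nu>)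
       \<and> (\<exists>\<rho>. restricted_ce (J r p mu0 \<gamma>) (occ \<gamma> p mu0) pis n \<rho>)
       \<and> (\<exists>\<rho>. restricted_cce (J r p mu0 \<gamma>) (occ \<gamma> p mu0) pis n \<rho>)"
proof -
  have "\<forall>i<n. is_dist (occ \<gamma> p mu0 (pis i))"
    using assms(1-4,6) by (simp add: is_dist_occ)
  then obtain \<nu> where "restr_simplex n \<nu>"
    and "supported_best_replies (J r p mu0 \<gamma>) (occ \<gamma> p mu0) pis n \<nu>"
    using supported_best_replies_exist assms(5-7) by blast
  then show ?thesis
    using restricted_nash_if_supported_best_replies restricted_ce_point_mass_if_supported_best_replies
      restricted_cce_if_ce by blast
qed

end
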